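(* Let $\mathbf{X}$ be a finite tournament isomorphic to an induced subtournament of $\mathbf{S}(2)$. Then there exists a finite tournament $\mathbf{Y}$ isomorphic to an induced subtournament of $\mathbf{S}(2)$ such that every extension of $\mathbf{X}$ in $\mathcal{P}_2$ embeds into every extension of $\mathbf{Y}$ in $\mathcal{P}_2$.
   Context: $\mathbf{S}(2)$ is the tournament whose vertices are the points of the unit circle of $\mathbb{C}$ with rational argument, with an arc from $x$ to $y$ iff $0<\arg(y/x)<\pi$. $\mathcal{P}_2$ is the class of finite structures $\mathbf{A}=(A,<^{\mathbf{A}},P_1^{\mathbf{A}},P_2^{\mathbf{A}})$ with $<^{\mathbf{A}}$ a linear order and $(P_1^{\mathbf{A}},P_2^{\mathbf{A}})$ a partition of $A$; an embedding is an isomorphism onto a substructure (order-preserving injection preserving $P_1$ and $P_2$). Writing $a\sim b$ when $a,b$ lie in the same part, $p(\mathbf{A})$ is the tournament on $A$ with an arc from $a$ to $b$ iff either ($a\sim b$ and $a<^{\mathbf{A}}b$) or ($a\not\sim b$ and $b<^{\mathbf{A}}a$). An extension of a tournament $\mathbf{X}$ is any $\mathbf{A}\in\mathcal{P}_2$ with $p(\mathbf{A})=\mathbf{X}$. *)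

theory Defs
  imports Complex_Main
begin

text \<open>Finite tournaments are given by a vertex set V and an arc relation E,
  only the restriction of E to V matters.\<close>

definition tournament :: "'a set \<Rightarrow> ('a \<Rightarrow> 'a \<Rightarrow> bool) \<Rightarrow> bool" where
  "tournament V E \<longleftrightarrow>
     (\<forall>a\<in>V. \<not> E a a) \<and>
     (\<forall>a\<in>V. \<forall>b\<in>V. a \<noteq> b \<longrightarrow> (E a b \<longleftrightarrow> \<not> E b a))"

definition S2_vertices :: "complex set" where
  "S2_vertices = {z. \<exists>q\<in>\<rat>. z = cis q}"

definition S2_arc :: "complex \<Rightarrow> complex \<Rightarrow> bool" where
  "S2_arc x y \<longleftrightarrow> 0 < Arg (y / x) \<and> Arg (y / x) < pi"

definition sub_S2 :: "'a set \<Rightarrow> ('a \<Rightarrow> 'a \<Rightarrow> bool) \<Rightarrow> bool" where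
  "sub_S2 V E \<longleftrightarrow> (\<exists>f. inj_on f V \<and> f ` V \<subseteq> S2_vertices \<and>
      (\<forall>a\<in>V. \<forall>b\<in>V. E a b \<longleftrightarrow> S2_arc (f a) (f b)))"

definition strict_linear_on :: "'a set \<Rightarrow> ('a \<Rightarrow> 'a \<Rightarrow> bool) \<Rightarrow> bool" where
  "strict_linear_on V lt \<longleftrightarrow>
     (\<forall>a\<in>V. \<not> lt a a) \<and>
     (\<forall>a\<in>V. \<forall>b\<in>V. \<forall>c\<in>V. lt a b \<longrightarrow> lt b c \<longrightarrow> lt a c) \<and>
     (\<forall>a\<in>V. \<forall>b\<in>V. a \<noteq> b \<longrightarrow> lt a b \<or> lt b a)"

text \<open>A structure of P_2 on the finite set V: linear order lt and a partition
  (P1, V - P1) of V.\<close>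

definition P2_struct :: "'a set \<Rightarrow> ('a \<Rightarrow> 'a \<Rightarrow> bool) \<Rightarrow> 'a set \<Rightarrow> bool" where
  "P2_struct V lt P1 \<longleftrightarrow> finite V \<and> strict_linear_on V lt \<and> P1 \<subseteq> V"

definition p_arc :: "('a \<Rightarrow> 'a \<Rightarrow> bool) \<Rightarrow> 'a set \<Rightarrow> 'a \<Rightarrow> 'a \<Rightarrow> bool" where
  "p_arc lt P1 a b \<longleftrightarrow>
     ((a \<in> P1 \<longleftrightarrow> b \<in> P1) \<and> lt a b) \<or> (\<not> (a \<in> P1 \<longleftrightarrow> b \<in> P1) \<and> lt b a)"

definition extension :: "'a set \<Rightarrow> ('a \<Rightarrow> 'a \<Rightarrow> bool) \<Rightarrow> ('a \<Rightarrow> 'a \<Rightarrow> bool) \<Rightarrow> 'a set \<Rightarrow> bool" where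
  "extension V E lt P1 \<longleftrightarrow> P2_struct V lt P1 \<and>
     (\<forall>a\<in>V. \<forall>b\<in>V. E a b \<longleftrightarrow> p_arc lt P1 a b)"

definition P2_embedding :: "'a set \<Rightarrow> ('a \<Rightarrow> 'a \<Rightarrow> bool) \<Rightarrow> 'a set \<Rightarrow>
    'b set \<Rightarrow> ('b \<Rightarrow> 'b \<Rightarrow> bool) \<Rightarrow> 'b set \<Rightarrow> ('a \<Rightarrow> 'b) \<Rightarrow> bool" where
  "P2_embedding V lt P1 W lt' P1' f \<longleftrightarrow>
     f ` V \<subseteq> W \<and> inj_on f V \<and>
     (\<forall>a\<in>V. \<forall>b\<in>V. lt a b \<longleftrightarrow> lt' (f a) (f b)) \<and>
     (\<forall>a\<in>V. a \<in> P1 \<longleftrightarrow> f a \<in> P1') \<and>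
     (\<forall>a\<in>V. a \<in> V - P1 \<longleftrightarrow> f a \<in> W - P1')"

end

theory Submission
  imports Defs
begin

text \<open>
  The witness Y is the rotational tournament on 2n+1 points, n = |X|, in which i beats the n
  points that follow it cyclically; it is realised in S(2) by the points cis (i c) for a rational
  angle c slightly larger than pi/(n+1). Y is twin-free: no two vertices have the same relation
  to all others. In an extension, two vertices that are consecutive in the order and lie in the
  same part are twins, so in every extension of Y the parts alternate along the order. An
  extension of X then embeds by sending its vertex of rank r to position 2r or 2r+1 of Y, the
  parity choosing the correct part.
\<close>

lemma sin_pos_iff:
  fixes x :: real
  assumes "-2*pi < x" "x < 2*pi"
  shows "0 < sin x \<longleftrightarrow> (0 < x \<and> x < pi) \<or> x < -pi"
proof -
  consider "x < -pi" | "-pi \<le> x" "x \<le> 0" | "0 < x" "x < pi" | "pi \<le> x" by linarith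
  then show ?thesis
  proof cases
    case 1
    then show ?thesis using sin_lt_zero[of "-x"] assms by auto
  next
    case 2
    then show ?thesis using sin_ge_zero[of "-x"] by auto
  next
    case 3
    then show ?thesis by (simp add: sin_gt_zero)
  next
    case 4
    then show ?thesis using sin_le_zero[of x] assms by auto
  qed
qed

lemma S2_arc_cis_iff: "S2_arc (cis a) (cis b) \<longleftrightarrow> 0 < sin (b - a)"
proof -
  have "S2_arc (cis a) (cis b) \<longleftrightarrow> 0 < sin (Arg (cis (b - a)))"
    using sin_pos_iff[of "Arg (cis (b - a))"] Arg_bounded[of "cis (b - a)"]
    by (auto simp: S2_arc_def cis_divide)
  also have "\<dots> \<longleftrightarrow> 0 < sin (b - a)" by (simp add: sin_Arg)
  finally show ?thesis .
qed

lemma sin_int_mult_pos_iff: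
  fixes c :: real and k :: int and n :: nat
  assumes c: "0 < c" "real n * c < pi" "pi < (real n + 1) * c" and k: "\<bar>k\<bar> \<le> 2 * int n"
  shows "0 < sin (k * c) \<longleftrightarrow> (1 \<le> k \<and> k \<le> int n) \<or> k \<le> -(int n + 1)"
proof -
  have mono: "real_of_int i * c \<le> real_of_int j * c \<longleftrightarrow> i \<le> j" for i j
    using c(1) by simp
  have "\<bar>k * c\<bar> \<le> 2 * n * c"
    using k c(1) by (simp add: abs_mult mult_right_mono flip: of_int_abs)
  then have bounds: "-2*pi < k * c" "k * c < 2*pi" using c(2) by auto
  have "0 < k * c \<longleftrightarrow> 1 \<le> k" using c(1) by (auto simp: zero_less_mult_iff)
  moreover have "k * c < pi \<longleftrightarrow> k \<le> int n"
    using mono[of k "int n"] mono[of "int n + 1" k] c(2,3) by auto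
  moreover have "k * c < -pi \<longleftrightarrow> k \<le> -(int n + 1)"
  proof
    assume "k * c < -pi"
    then have "\<not> - int n \<le> k" using mono[of "- int n" k] c(2) by auto
    then show "k \<le> -(int n + 1)" by simp
  qed (use mono[of k "-(int n + 1)"] c(3) in \<open>auto simp: algebra_simps\<close>)
  ultimately show ?thesis using sin_pos_iff[OF bounds] by blast
qed

lemma rational_angle_exists:
  fixes n :: nat
  obtains c :: real where "c \<in> \<rat>" "0 < c" "real n * c < pi" "pi < (real n + 1) * c"
proof -
  have "pi / (real n + 1) < pi / (real n + 1/2)" by (intro divide_strict_left_mono) auto
  then obtain c where c: "c \<in> \<rat>" "pi / (real n + 1) < c" "c < pi / (real n + 1/2)"
    using Rats_dense_in_real by blast
  have "0 < pi / (real n + 1)" by simp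
  then have "0 < c" using c(2) by linarith
  have "pi < (real n + 1) * c" using c(2) by (simp add: pos_divide_less_eq mult.commute)
  moreover have "(real n + 1/2) * c < pi" using c(3) by (simp add: pos_less_divide_eq mult.commute)
  ultimately show ?thesis using that c(1) \<open>0 < c\<close> by (simp add: algebra_simps)
qed

text \<open>For i, j < 2n+1 this says that (j - i) mod (2n+1) lies in {1..n}.\<close>

definition rot_arc :: "nat \<Rightarrow> nat \<Rightarrow> nat \<Rightarrow> bool" where
  "rot_arc n i j \<longleftrightarrow> (1 \<le> int j - int i \<and> int j - int i \<le> n) \<or> int j - int i \<le> -(n + 1)"

lemma tournament_rot: "tournament {0..<2*n+1} (rot_arc n)"
  unfolding tournament_def rot_arc_def by auto

lemma sub_S2_rot: "sub_S2 {0..<2*n+1} (rot_arc n)"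
proof -
  obtain c :: real where c: "c \<in> \<rat>" "0 < c" "real n * c < pi" "pi < (real n + 1) * c"
    using rational_angle_exists .
  have arc: "S2_arc (cis (i * c)) (cis (j * c)) \<longleftrightarrow> rot_arc n i j"
    if "i \<in> {0..<2*n+1}" "j \<in> {0..<2*n+1}" for i j
  proof -
    have "S2_arc (cis (i * c)) (cis (j * c)) \<longleftrightarrow> 0 < sin (of_int (int j - int i) * c)"
      by (simp add: S2_arc_cis_iff left_diff_distrib)
    also have "\<dots> \<longleftrightarrow> rot_arc n i j"
      unfolding rot_arc_def using that by (intro sin_int_mult_pos_iff[OF c(2-4)]) auto
    finally show ?thesis .
  qed
  have inj: "inj_on (\<lambda>i. cis (i * c)) {0..<2*n+1}"
  proof (rule inj_onI, rule ccontr)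
    fix i j assume ij: "i \<in> {0..<2*n+1}" "j \<in> {0..<2*n+1}" "cis (i * c) = cis (j * c)" "i \<noteq> j"
    then have "rot_arc n i j \<or> rot_arc n j i" unfolding rot_arc_def by auto
    then have "S2_arc (cis (j * c)) (cis (j * c))"
      using arc[OF ij(1,2)] arc[OF ij(2,1)] unfolding ij(3) by blast
    then show False by (simp add: S2_arc_cis_iff)
  qed
  have "cis (i * c) \<in> S2_vertices" for i :: nat
    unfolding S2_vertices_def using c(1) by (blast intro: Rats_mult Rats_of_nat)
  then have "(\<lambda>i. cis (i * c)) ` {0..<2*n+1} \<subseteq> S2_vertices" by blast
  with inj arc show ?thesis unfolding sub_S2_def by blast
qed

definition twin_free :: "'a set \<Rightarrow> ('a \<Rightarrow> 'a \<Rightarrow> bool) \<Rightarrow> bool" where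
  "twin_free V E \<longleftrightarrow> (\<forall>a\<in>V. \<forall>b\<in>V. a \<noteq> b \<longrightarrow> (\<exists>x\<in>V - {a, b}. E a x \<noteq> E b x))"

lemma rot_arc_distinguishes:
  assumes "a < 2*n+1" "b < 2*n+1" "rot_arc n a b"
  shows "\<exists>x<2*n+1. x \<noteq> a \<and> x \<noteq> b \<and> \<not> rot_arc n a x \<and> rot_arc n b x"
proof (cases "a < n \<and> a < b \<and> b \<le> a + n")
  case True
  then show ?thesis using assms unfolding rot_arc_def by (intro exI[of _ "a + n + 1"]) auto
next
  case False
  then show ?thesis using assms unfolding rot_arc_def by (intro exI[of _ "a - n"]) auto
qed

lemma twin_free_rot: "twin_free {0..<2*n+1} (rot_arc n)"
  unfolding twin_free_def
proof (intro ballI impI)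
  fix a b assume ab: "a \<in> {0..<2*n+1}" "b \<in> {0..<2*n+1}" "a \<noteq> b"
  then consider "rot_arc n a b" | "rot_arc n b a" unfolding rot_arc_def by fastforce
  then show "\<exists>x\<in>{0..<2*n+1} - {a, b}. rot_arc n a x \<noteq> rot_arc n b x"
  proof cases
    case 1
    then obtain x where "x < 2*n+1" "x \<noteq> a" "x \<noteq> b" "\<not> rot_arc n a x" "rot_arc n b x"
      using ab rot_arc_distinguishes[of a n b] by auto
    then show ?thesis by auto
  next
    case 2
    then obtain x where "x < 2*n+1" "x \<noteq> a" "x \<noteq> b" "\<not> rot_arc n b x" "rot_arc n a x"
      using ab rot_arc_distinguishes[of b n a] by auto
    then show ?thesis by auto
  qed
qed

lemma strict_linear_onD:
  assumes "strict_linear_on A lt"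
  shows strict_linear_on_irrefl: "x \<in> A \<Longrightarrow> \<not> lt x x"
    and strict_linear_on_trans: "x \<in> A \<Longrightarrow> y \<in> A \<Longrightarrow> z \<in> A \<Longrightarrow> lt x y \<Longrightarrow> lt y z \<Longrightarrow> lt x z"
    and strict_linear_on_total: "x \<in> A \<Longrightarrow> y \<in> A \<Longrightarrow> x \<noteq> y \<Longrightarrow> lt x y \<or> lt y x"
  using assms unfolding strict_linear_on_def by blast+

definition lin_rank :: "('a \<Rightarrow> 'a \<Rightarrow> bool) \<Rightarrow> 'a set \<Rightarrow> 'a \<Rightarrow> nat" where
  "lin_rank lt A x = card {u\<in>A. lt u x}"

definition lin_enum :: "('a \<Rightarrow> 'a \<Rightarrow> bool) \<Rightarrow> 'a set \<Rightarrow> nat \<Rightarrow> 'a" where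
  "lin_enum lt A = inv_into A (lin_rank lt A)"

definition consecutive :: "('a \<Rightarrow> 'a \<Rightarrow> bool) \<Rightarrow> 'a set \<Rightarrow> 'a \<Rightarrow> 'a \<Rightarrow> bool" where
  "consecutive lt A a b \<longleftrightarrow> lt a b \<and> \<not> (\<exists>c\<in>A. lt a c \<and> lt c b)"

definition alternating :: "('a \<Rightarrow> 'a \<Rightarrow> bool) \<Rightarrow> 'a set \<Rightarrow> 'a set \<Rightarrow> bool" where
  "alternating lt A P \<longleftrightarrow> (\<forall>a\<in>A. \<forall>b\<in>A. consecutive lt A a b \<longrightarrow> (a \<in> P \<longleftrightarrow> b \<notin> P))"

context
  fixes A :: "'a set" and lt :: "'a \<Rightarrow> 'a \<Rightarrow> bool"
  assumes fin: "finite A" and lin: "strict_linear_on A lt"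
begin

lemma lin_rank_strict_mono:
  assumes "x \<in> A" "y \<in> A" "lt x y"
  shows "lin_rank lt A x < lin_rank lt A y"
  unfolding lin_rank_def
proof (rule psubset_card_mono)
  show "{u\<in>A. lt u x} \<subset> {u\<in>A. lt u y}"
    using assms strict_linear_on_trans[OF lin _ assms(1,2)] strict_linear_on_irrefl[OF lin] by blast
qed (use fin in simp)

lemma lin_rank_less_iff:
  assumes "x \<in> A" "y \<in> A"
  shows "lin_rank lt A x < lin_rank lt A y \<longleftrightarrow> lt x y"
  using lin_rank_strict_mono[OF assms] lin_rank_strict_mono[OF assms(2,1)]
    strict_linear_on_total[OF lin assms]
  by (cases "x = y") auto

lemma inj_on_lin_rank: "inj_on (lin_rank lt A) A"
  by (rule inj_onI) (metis lin_rank_less_iff less_irrefl strict_linear_on_total[OF lin])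

lemma lin_rank_less_card: "x \<in> A \<Longrightarrow> lin_rank lt A x < card A"
  unfolding lin_rank_def using fin strict_linear_on_irrefl[OF lin] by (intro psubset_card_mono) auto

lemma lin_rank_image: "lin_rank lt A ` A = {..<card A}"
proof (rule card_subset_eq)
  show "lin_rank lt A ` A \<subseteq> {..<card A}" using lin_rank_less_card by auto
  show "card (lin_rank lt A ` A) = card {..<card A}" using card_image[OF inj_on_lin_rank] by simp
qed simp

lemma lin_enum_in: "m < card A \<Longrightarrow> lin_enum lt A m \<in> A"
  unfolding lin_enum_def using lin_rank_image by (metis inv_into_into lessThan_iff)

lemma lin_rank_lin_enum: "m < card A \<Longrightarrow> lin_rank lt A (lin_enum lt A m) = m"
  unfolding lin_enum_def using lin_rank_image by (metis f_inv_into_f lessThan_iff)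

lemma lin_enum_less_iff:
  "m < card A \<Longrightarrow> k < card A \<Longrightarrow> lt (lin_enum lt A m) (lin_enum lt A k) \<longleftrightarrow> m < k"
  using lin_rank_less_iff[OF lin_enum_in lin_enum_in] lin_rank_lin_enum by metis

lemma consecutive_lin_enum:
  assumes "Suc m < card A"
  shows "consecutive lt A (lin_enum lt A m) (lin_enum lt A (Suc m))"
proof -
  have "\<not> (lt (lin_enum lt A m) c \<and> lt c (lin_enum lt A (Suc m)))" if "c \<in> A" for c
  proof -
    define k where "k = lin_rank lt A c"
    have "c = lin_enum lt A k"
      unfolding k_def lin_enum_def using inv_into_f_f[OF inj_on_lin_rank that] by simp
    then show ?thesis using lin_enum_less_iff[of m k] lin_enum_less_iff[of k "Suc m"]
        lin_rank_less_card[OF that] assms unfolding k_def by auto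
  qed
  then show ?thesis unfolding consecutive_def using lin_enum_less_iff assms by auto
qed

lemma alternating_lin_enum_parity:
  assumes "alternating lt A P" "m < card A"
  shows "lin_enum lt A m \<in> P \<longleftrightarrow> (even m \<longleftrightarrow> lin_enum lt A 0 \<in> P)"
  using assms(2)
proof (induction m)
  case (Suc m)
  then show ?case
    using consecutive_lin_enum[OF Suc.prems] lin_enum_in[of m] lin_enum_in[of "Suc m"] assms(1)
    unfolding alternating_def by auto
qed simp

end

lemma P2_embedding_into_alternating:
  assumes V: "finite V" "strict_linear_on V lt" and W: "finite W" "strict_linear_on W lt'"
    and alt: "alternating lt' W P1'" and card: "2 * card V < card W"
  shows "\<exists>f. P2_embedding V lt P1 W lt' P1' f"
proof -
  define pos where
    "pos v = 2 * lin_rank lt V v + (if v \<in> P1 \<longleftrightarrow> lin_enum lt' W 0 \<in> P1' then 0 else 1)" for v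
  define f where "f v = lin_enum lt' W (pos v)" for v
  have pos_less_card: "pos v < card W" if "v \<in> V" for v
    using lin_rank_less_card[OF V that] card unfolding pos_def by auto
  have f_in: "f v \<in> W" if "v \<in> V" for v
    unfolding f_def using lin_enum_in[OF W pos_less_card[OF that]] .
  have f_part: "f v \<in> P1' \<longleftrightarrow> v \<in> P1" if "v \<in> V" for v
    using alternating_lin_enum_parity[OF W alt pos_less_card[OF that]] unfolding f_def pos_def by auto
  have f_less_iff: "lt' (f a) (f b) \<longleftrightarrow> lt a b" if "a \<in> V" "b \<in> V" for a b
  proof -
    have "lt' (f a) (f b) \<longleftrightarrow> pos a < pos b"
      unfolding f_def using lin_enum_less_iff[OF W] pos_less_card that by blast
    also have "\<dots> \<longleftrightarrow> lin_rank lt V a < lin_rank lt V b"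
    proof (cases "a = b")
      case False
      then have "lin_rank lt V a \<noteq> lin_rank lt V b"
        using inj_on_lin_rank[OF V] that unfolding inj_on_def by blast
      then show ?thesis unfolding pos_def by (auto split: if_splits)
    qed simp
    also have "\<dots> \<longleftrightarrow> lt a b" using lin_rank_less_iff[OF V that] .
    finally show ?thesis .
  qed
  have "inj_on f V"
  proof (rule inj_onI, rule ccontr)
    fix a b assume "a \<in> V" "b \<in> V" "f a = f b" "a \<noteq> b"
    then show False
      using f_less_iff strict_linear_on_total[OF V(2)] strict_linear_on_irrefl[OF W(2)] f_in by metis
  qed
  then have "P2_embedding V lt P1 W lt' P1' f"
    unfolding P2_embedding_def using f_in f_part f_less_iff by auto
  then show ?thesis by blast
qed

lemma extension_consecutive_same_part_twins:
  assumes ext: "extension W F lt P" and ab: "a \<in> W" "b \<in> W" "consecutive lt W a b"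
    and same: "a \<in> P \<longleftrightarrow> b \<in> P" and x: "x \<in> W - {a, b}"
  shows "F a x \<longleftrightarrow> F b x"
proof -
  have lin: "strict_linear_on W lt"
    using ext unfolding extension_def P2_struct_def by blast
  have arcs: "F u v \<longleftrightarrow> p_arc lt P u v" if "u \<in> W" "v \<in> W" for u v
    using ext that unfolding extension_def by blast
  have "lt a x \<longleftrightarrow> lt b x"
    using ab x strict_linear_on_trans[OF lin] strict_linear_on_total[OF lin]
    unfolding consecutive_def by blast
  moreover have "lt x a \<longleftrightarrow> lt x b"
    using ab x strict_linear_on_trans[OF lin] strict_linear_on_total[OF lin]
    unfolding consecutive_def by blast
  ultimately show ?thesis using arcs[of a x] arcs[of b x] ab x same unfolding p_arc_def by auto
qed

lemma extension_twin_free_alternating: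
  assumes "extension W F lt P" "twin_free W F"
  shows "alternating lt W P"
  unfolding alternating_def
proof (intro ballI impI)
  fix a b assume ab: "a \<in> W" "b \<in> W" "consecutive lt W a b"
  have "strict_linear_on W lt" using assms(1) unfolding extension_def P2_struct_def by blast
  then have "a \<noteq> b" using ab strict_linear_on_irrefl unfolding consecutive_def by metis
  then obtain x where "x \<in> W - {a, b}" "F a x \<noteq> F b x"
    using assms(2) ab unfolding twin_free_def by blast
  then show "a \<in> P \<longleftrightarrow> b \<notin> P"
    using extension_consecutive_same_part_twins[OF assms(1) ab] by blast
qed

theorem lemma3:
  fixes V :: "'a set" and E :: "'a \<Rightarrow> 'a \<Rightarrow> bool"
  assumes "finite V" and "tournament V E" and "sub_S2 V E"
  shows "\<exists>(W :: nat set) F. finite W \<and> tournament W F \<and> sub_S2 W F \<and>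
           (\<forall>lt P1 lt' P1'. extension V E lt P1 \<longrightarrow> extension W F lt' P1' \<longrightarrow>
              (\<exists>f. P2_embedding V lt P1 W lt' P1' f))"
proof -
  \<comment> \<open>Y depends on X only through its size.\<close>
  define n where "n = card V"
  define W where "W = {0..<2*n+1}"
  have "\<exists>f. P2_embedding V lt P1 W lt' P1' f"
    if ext: "extension V E lt P1" and ext': "extension W (rot_arc n) lt' P1'" for lt P1 lt' P1'
  proof (rule P2_embedding_into_alternating)
    show "alternating lt' W P1'"
      using extension_twin_free_alternating[OF ext'] twin_free_rot unfolding W_def by blast
  qed (use ext ext' in \<open>auto simp: extension_def P2_struct_def W_def n_def\<close>)
  moreover have "finite W" "tournament W (rot_arc n)" "sub_S2 W (rot_arc n)"
    unfolding W_def using tournament_rot sub_S2_rot by simp_all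
  ultimately show ?thesis by blast
qed

end
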